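(* Let $X$ be a real reflexive Banach space, $f:X\to\mathbb{R}\cup\{+\infty\}$ a lower semicontinuous proper convex function, $f^{FY}(x,x^{\ast}):=f(x)+f^{\ast}(x^{\ast})$, and let $h\in\mathcal{H}(\partial f)$ satisfy $h\le f^{FY}$. Then for every $\epsilon>0$ and $x\in X$, $\breve{T}_h(\tfrac{\epsilon}{2},x)\subset\partial_\epsilon f(x)$.
   Context: $X^{\ast}$ is the dual of $X$ with pairing $\langle\cdot,\cdot\rangle$; $f^{\ast}(x^{\ast})=\sup_x\{\langle x,x^{\ast}\rangle-f(x)\}$, $\partial f$ is the convex subdifferential, and $\partial_\epsilon f(x)=\{x^{\ast}:f(y)-f(x)\ge\langle y-x,x^{\ast}\rangle-\epsilon\ \forall y\}$ if $f(x)<\infty$, $\emptyset$ otherwise. The dual of $X\times X^{\ast}$ is identified with $X^{\ast}\times X$ via $\langle (x,x^{\ast}),(y^{\ast},y)\rangle=\langle x,y^{\ast}\rangle+\langle y,x^{\ast}\rangle$. For a maximally monotone $T$, $\mathcal{H}(T)$ is the family of lower semicontinuous convex $h:X\times X^{\ast}\to\mathbb{R}\cup\{+\infty\}$ with $h(x,x^{\ast})\ge\langle x,x^{\ast}\rangle$ everywhere and equality whenever $x^{\ast}\in T(x)$. For $\eta\ge0$, $\partial_\eta h(z)$ is the set of $(y^{\ast},y)\in X^{\ast}\times X$ with $h(w,w^{\ast})\ge h(z)+\langle (w,w^{\ast})-z,(y^{\ast},y)\rangle-\eta$ for all $(w,w^{\ast})$ when $h(z)<\infty$, and $\emptyset$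 otherwise; $\breve{T}_h(\epsilon,x):=\{x^{\ast}:(x^{\ast},x)\in\partial_{2\epsilon}h(x,x^{\ast})\}$. *)

theory Defs
  imports "HOL-Analysis.Analysis"
begin

(* The dual X* of a real Banach space X is modelled as the space of bounded
linear functionals ('a \<Rightarrow>\<^sub>L real); the pairing is blinfun_apply.
Extended-real valued functions X \<rightarrow> \<real> \<union> {+\<infinity>} are modelled as maps into ereal
that never take the value -\<infinity>. *)

definition reflexive_space :: "'a::banach itself \<Rightarrow> bool" where
  "reflexive_space _ \<longleftrightarrow>
     (\<forall>\<phi> :: ('a \<Rightarrow>\<^sub>L real) \<Rightarrow>\<^sub>L real. \<exists>x::'a. \<forall>g. blinfun_apply \<phi> g = blinfun_apply g x)"

definition lsc_fun :: "('b::topological_space \<Rightarrow> ereal) \<Rightarrow> bool" where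
  "lsc_fun f \<longleftrightarrow> (\<forall>c::real. closed {x. f x \<le> ereal c})"

definition convex_fun :: "('b::real_vector \<Rightarrow> ereal) \<Rightarrow> bool" where
  "convex_fun f \<longleftrightarrow> (\<forall>x y t. 0 < t \<and> t < 1 \<longrightarrow>
      f (t *\<^sub>R x + (1 - t) *\<^sub>R y) \<le> ereal t * f x + ereal (1 - t) * f y)"

definition no_minf :: "('b \<Rightarrow> ereal) \<Rightarrow> bool" where
  "no_minf f \<longleftrightarrow> (\<forall>x. f x \<noteq> -\<infinity>)"

definition proper_fun :: "('b \<Rightarrow> ereal) \<Rightarrow> bool" where
  "proper_fun f \<longleftrightarrow> no_minf f \<and> (\<exists>x. f x < \<infinity>)"

definition conj_fun :: "('a::real_normed_vector \<Rightarrow> ereal) \<Rightarrow> ('a \<Rightarrow>\<^sub>L real) \<Rightarrow> ereal" where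
  "conj_fun f xs = (SUP x. ereal (blinfun_apply xs x) - f x)"

definition FY :: "('a::real_normed_vector \<Rightarrow> ereal) \<Rightarrow> 'a \<times> ('a \<Rightarrow>\<^sub>L real) \<Rightarrow> ereal" where
  "FY f z = f (fst z) + conj_fun f (snd z)"

definition eps_subdiff :: "real \<Rightarrow> ('a::real_normed_vector \<Rightarrow> ereal) \<Rightarrow> 'a \<Rightarrow> ('a \<Rightarrow>\<^sub>L real) set" where
  "eps_subdiff \<epsilon> f x = (if f x < \<infinity> then
     {xs. \<forall>y. f y - f x \<ge> ereal (blinfun_apply xs (y - x)) - ereal \<epsilon>} else {})"

definition subdiff :: "('a::real_normed_vector \<Rightarrow> ereal) \<Rightarrow> 'a \<Rightarrow> ('a \<Rightarrow>\<^sub>L real) set" where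
  "subdiff f x = eps_subdiff 0 f x"

definition repr_class :: "('a::real_normed_vector \<Rightarrow> ('a \<Rightarrow>\<^sub>L real) set)
    \<Rightarrow> ('a \<times> ('a \<Rightarrow>\<^sub>L real) \<Rightarrow> ereal) set" where
  "repr_class T = {h. lsc_fun h \<and> convex_fun h \<and> no_minf h \<and>
      (\<forall>x xs. h (x, xs) \<ge> ereal (blinfun_apply xs x)) \<and>
      (\<forall>x xs. xs \<in> T x \<longrightarrow> h (x, xs) = ereal (blinfun_apply xs x))}"

(* eta-subdifferential of h : X \<times> X* \<rightarrow> \<real> \<union> {+\<infinity>}, with values in X* \<times> X,
 using the pairing <(w,ws),(ys,y)> = ys(w) + ws(y) *)
definition eps_subdiff_h :: "real \<Rightarrow> ('a::real_normed_vector \<times> ('a \<Rightarrow>\<^sub>L real) \<Rightarrow> ereal)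
    \<Rightarrow> 'a \<times> ('a \<Rightarrow>\<^sub>L real) \<Rightarrow> (('a \<Rightarrow>\<^sub>L real) \<times> 'a) set" where
  "eps_subdiff_h \<eta> h z = (if h z < \<infinity> then
     {(ys, y). \<forall>w ws. h (w, ws) \<ge> h z
        + ereal (blinfun_apply ys (w - fst z) + blinfun_apply (ws - snd z) y) - ereal \<eta>}
     else {})"

definition T_breve :: "('a::real_normed_vector \<times> ('a \<Rightarrow>\<^sub>L real) \<Rightarrow> ereal)
    \<Rightarrow> real \<Rightarrow> 'a \<Rightarrow> ('a \<Rightarrow>\<^sub>L real) set" where
  "T_breve h \<epsilon> x = {xs. (xs, x) \<in> eps_subdiff_h (2 * \<epsilon>) h (x, xs)}"

end

theory Submission
  imports Defs
begin

text \<open>The \<open>\<epsilon>\<close>-subgradient inequality of \<open>h\<close> at \<open>(x, x\<^sup>*)\<close>, together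
  with \<open>h(x, x\<^sup>*) \<ge> \<langle>x, x\<^sup>*\<rangle>\<close> and \<open>h \<le> f\<^sup>F\<^sup>Y\<close>, gives
  \<open>\<langle>w - x, x\<^sup>*\<rangle> + \<langle>x, w\<^sup>*\<rangle> - \<epsilon> \<le> f(w) + f\<^sup>*(w\<^sup>*)\<close> for all \<open>w, w\<^sup>*\<close>. Taking the supremum of
  \<open>\<langle>x, w\<^sup>*\<rangle> - f\<^sup>*(w\<^sup>*)\<close> over \<open>w\<^sup>*\<close> bounds \<open>f\<^sup>*\<^sup>*(x)\<close> by \<open>f(w) + \<epsilon> - \<langle>w - x, x\<^sup>*\<rangle>\<close>, and
  \<open>f \<le> f\<^sup>*\<^sup>*\<close> for a proper lower semicontinuous convex \<open>f\<close>: a point strictly below the graph is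
  separated from the closed convex epigraph by a continuous affine minorant, by the Hahn--Banach
  theorem for sublinear functionals.\<close>

section \<open>Hahn--Banach and separation from a convex set\<close>

definition sublinear :: "('a::real_vector \<Rightarrow> real) \<Rightarrow> bool" where
  "sublinear p \<longleftrightarrow>
     (\<forall>x y. p (x + y) \<le> p x + p y) \<and> (\<forall>s x. 0 < s \<longrightarrow> p (s *\<^sub>R x) = s * p x)"

lemma sublinear_add_le: "sublinear p \<Longrightarrow> p (x + y) \<le> p x + p y"
  unfolding sublinear_def by blast

lemma sublinear_scaleR: "sublinear p \<Longrightarrow> 0 < s \<Longrightarrow> p (s *\<^sub>R x) = s * p x"
  unfolding sublinear_def by blast

lemma sublinear_0: "sublinear p \<Longrightarrow> p 0 = 0"
  using sublinear_scaleR[of p 2 0] by simp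

text \<open>A linear functional dominated by \<open>p\<close> is encoded by its graph, a subspace of
  \<open>'a \<times> real\<close> contained in the hypograph of \<open>p\<close>.\<close>

lemma dominated_extension_constant:
  fixes p :: "'a::real_vector \<Rightarrow> real"
  assumes p: "sublinear p" and G: "subspace G" and dom: "G \<subseteq> {(x, a). a \<le> p x}"
  obtains c where "\<And>x a. (x, a) \<in> G \<Longrightarrow> a - p (x - y) \<le> c"
    and "\<And>x a. (x, a) \<in> G \<Longrightarrow> c \<le> p (x + y) - a"
proof -
  define L where "L = {a - p (x - y) | x a. (x, a) \<in> G}"
  have "(0, 0) \<in> G" using subspace_0[OF G] by (simp add: zero_prod_def)
  hence L_ne: "L \<noteq> {}" unfolding L_def by blast
  have L_le: "l \<le> p (x' + y) - a'" if "l \<in> L" "(x', a') \<in> G" for l x' a'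
  proof -
    obtain x a where l: "l = a - p (x - y)" "(x, a) \<in> G" using \<open>l \<in> L\<close> unfolding L_def by blast
    have "(x + x', a + a') \<in> G" using subspace_add[OF G l(2) that(2)] by simp
    hence "a + a' \<le> p (x + x')" using dom by blast
    also have "\<dots> \<le> p (x - y) + p (x' + y)" using sublinear_add_le[OF p, of "x - y" "x' + y"] by simp
    finally show ?thesis using l by simp
  qed
  have "bdd_above L" using L_le \<open>(0, 0) \<in> G\<close> unfolding bdd_above_def by blast
  show thesis
  proof
    show "a - p (x - y) \<le> Sup L" if "(x, a) \<in> G" for x a
      by (rule cSup_upper[OF _ \<open>bdd_above L\<close>]) (use that in \<open>auto simp: L_def\<close>)
    show "Sup L \<le> p (x + y) - a" if "(x, a) \<in> G" for x a
      by (rule cSup_least[OF L_ne]) (use L_le that in auto)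
  qed
qed

lemma subspace_dominated_extend:
  fixes p :: "'a::real_vector \<Rightarrow> real"
  assumes p: "sublinear p" and G: "subspace G" and dom: "G \<subseteq> {(x, a). a \<le> p x}"
    and y: "\<And>a. (y, a) \<notin> G"
  shows "\<exists>G'. subspace G' \<and> G' \<subseteq> {(x, a). a \<le> p x} \<and> G \<subset> G'"
proof -
  obtain c where c_lower: "\<And>x a. (x, a) \<in> G \<Longrightarrow> a - p (x - y) \<le> c"
    and c_upper: "\<And>x a. (x, a) \<in> G \<Longrightarrow> c \<le> p (x + y) - a"
    using dominated_extension_constant[OF p G dom] by blast
  define G' where "G' = {g + t *\<^sub>R (y, c) | g t. g \<in> G}"
  have G': "subspace G'"
  proof (rule subspaceI)
    have "0 = 0 + 0 *\<^sub>R (y, c)" by (simp add: zero_prod_def)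
    thus "0 \<in> G'" unfolding G'_def using subspace_0[OF G] by blast
  next
    fix u v assume "u \<in> G'" "v \<in> G'"
    then obtain g t g' t' where "u = g + t *\<^sub>R (y, c)" "v = g' + t' *\<^sub>R (y, c)" "g \<in> G" "g' \<in> G"
      unfolding G'_def by blast
    moreover have "u + v = (g + g') + (t + t') *\<^sub>R (y, c)" if "u = g + t *\<^sub>R (y, c)" "v = g' + t' *\<^sub>R (y, c)"
      using that by (simp add: algebra_simps)
    ultimately show "u + v \<in> G'" unfolding G'_def using subspace_add[OF G] by blast
  next
    fix s u assume "u \<in> G'"
    then obtain g t where "u = g + t *\<^sub>R (y, c)" "g \<in> G" unfolding G'_def by blast
    moreover have "s *\<^sub>R u = s *\<^sub>R g + (s * t) *\<^sub>R (y, c)" if "u = g + t *\<^sub>R (y, c)"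
      using that by (simp add: algebra_simps)
    ultimately show "s *\<^sub>R u \<in> G'" unfolding G'_def using subspace_scale[OF G] by blast
  qed
  have "a + t * c \<le> p (x + t *\<^sub>R y)" if "(x, a) \<in> G" for x a t
  proof -
    consider "t = 0" | "t > 0" | "t < 0" by linarith
    thus ?thesis
    proof cases
      case 1 thus ?thesis using that dom by auto
    next
      case 2
      have "((1 / t) *\<^sub>R x, a / t) \<in> G" using subspace_scale[OF G that, of "1 / t"] by simp
      hence "t * c \<le> t * (p ((1 / t) *\<^sub>R x + y) - a / t)" using c_upper 2 by (simp add: mult_left_mono)
      also have "\<dots> = p (t *\<^sub>R ((1 / t) *\<^sub>R x + y)) - a" using 2 sublinear_scaleR[OF p 2] by (simp add: right_diff_distrib)
      also have "t *\<^sub>R ((1 / t) *\<^sub>R x + y) = x + t *\<^sub>R y" using 2 by (simp add: scaleR_add_right)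
      finally show ?thesis by simp
    next
      case 3
      have "((1 / (- t)) *\<^sub>R x, a / (- t)) \<in> G" using subspace_scale[OF G that, of "1 / (- t)"] by simp
      hence "- t * (a / (- t) - p ((1 / (- t)) *\<^sub>R x - y)) \<le> - t * c" using c_lower 3 by (simp add: mult_left_mono)
      hence "a - p ((- t) *\<^sub>R ((1 / (- t)) *\<^sub>R x - y)) \<le> - t * c"
        using 3 sublinear_scaleR[OF p, of "- t"] by (simp add: right_diff_distrib)
      also have "(- t) *\<^sub>R ((1 / (- t)) *\<^sub>R x - y) = x + t *\<^sub>R y" using 3 by (simp add: scaleR_diff_right)
      finally show ?thesis by simp
    qed
  qed
  hence G'_dom: "G' \<subseteq> {(x, a). a \<le> p x}" unfolding G'_def by auto
  have "G \<subseteq> G'" unfolding G'_def by force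
  moreover have "(y, c) = 0 + 1 *\<^sub>R (y, c)" by simp
  hence "(y, c) \<in> G' - G" unfolding G'_def using subspace_0[OF G] y by blast
  ultimately show ?thesis using G' G'_dom by blast
qed

theorem hahn_banach_sublinear:
  fixes p :: "'a::real_vector \<Rightarrow> real"
  assumes p: "sublinear p"
  shows "\<exists>g. linear g \<and> (\<forall>x. g x \<le> p x)"
proof -
  define A where "A = {G :: ('a \<times> real) set. subspace G \<and> G \<subseteq> {(x, a). a \<le> p x}}"
  have "\<forall>C\<in>chains A. \<exists>U\<in>A. \<forall>X\<in>C. X \<subseteq> U"
  proof
    fix C assume C: "C \<in> chains A"
    show "\<exists>U\<in>A. \<forall>X\<in>C. X \<subseteq> U"
  proof (cases "C = {}")
    case True
    have "{0} \<subseteq> {(x, a). a \<le> p x}" using sublinear_0[OF p] by (simp add: zero_prod_def)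
    hence "{0} \<in> A" unfolding A_def by simp
    thus ?thesis using True by blast
  next
    case False
    have CA: "C \<subseteq> A" and chain: "\<And>X Y. X \<in> C \<Longrightarrow> Y \<in> C \<Longrightarrow> X \<subseteq> Y \<or> Y \<subseteq> X"
      using C unfolding chains_def chain_subset_def by auto
    have "subspace (\<Union>C)"
    proof (rule subspaceI)
      show "0 \<in> \<Union>C" using False CA subspace_0 unfolding A_def by blast
    next
      fix u v assume "u \<in> \<Union>C" "v \<in> \<Union>C"
      then obtain Z where "Z \<in> C" "u \<in> Z" "v \<in> Z" using chain by blast
      thus "u + v \<in> \<Union>C" using CA subspace_add unfolding A_def by blast
    next
      fix s u assume "u \<in> \<Union>C"
      thus "s *\<^sub>R u \<in> \<Union>C" using CA subspace_scale unfolding A_def by blast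
    qed
    hence "\<Union>C \<in> A" using CA unfolding A_def by blast
    thus ?thesis by blast
  qed
  qed
  then obtain M where "M \<in> A" and max: "\<forall>X\<in>A. M \<subseteq> X \<longrightarrow> X = M"
    by (blast dest: Zorn_Lemma2)
  hence M: "subspace M" and M_dom: "M \<subseteq> {(x, a). a \<le> p x}" unfolding A_def by auto
  have total: "\<exists>a. (x, a) \<in> M" for x
  proof (rule ccontr)
    assume "\<nexists>a. (x, a) \<in> M"
    then obtain G' where "subspace G'" "G' \<subseteq> {(x, a). a \<le> p x}" "M \<subset> G'"
      using subspace_dominated_extend[OF p M M_dom] by blast
    thus False using max unfolding A_def by blast
  qed
  have unique: "a = b" if "(x, a) \<in> M" "(x, b) \<in> M" for x a b
  proof -
    have "(0, a - b) \<in> M" "(0, b - a) \<in> M"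
      using subspace_diff[OF M that(1) that(2)] subspace_diff[OF M that(2) that(1)] by simp_all
    hence "a - b \<le> 0" "b - a \<le> 0" using M_dom sublinear_0[OF p] by auto
    thus ?thesis by simp
  qed
  define g where "g x = (SOME a. (x, a) \<in> M)" for x
  have g_graph: "(x, g x) \<in> M" for x unfolding g_def using total by (metis someI_ex)
  have "linear g"
  proof (rule linearI)
    fix x y s
    have "(x + y, g x + g y) \<in> M" using subspace_add[OF M g_graph g_graph] by simp
    thus "g (x + y) = g x + g y" by (rule unique[OF g_graph])
    have "(s *\<^sub>R x, s * g x) \<in> M" using subspace_scale[OF M g_graph] by simp
    thus "g (s *\<^sub>R x) = s *\<^sub>R g x" by (simp add: unique[OF g_graph])
  qed
  moreover have "g x \<le> p x" for x using g_graph M_dom by blast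
  ultimately show ?thesis by blast
qed

text \<open>For \<open>K\<close> staying \<open>\<delta>\<close> away from \<open>0\<close> this is a sublinear function below the norm and at
  most \<open>-\<delta>\<close> on \<open>K\<close>, so every linear functional it dominates separates \<open>K\<close> from \<open>0\<close>
  with margin \<open>\<delta>\<close>.\<close>

definition cone_gauge :: "'a::real_normed_vector set \<Rightarrow> real \<Rightarrow> 'a \<Rightarrow> real" where
  "cone_gauge K \<delta> v = Inf {norm (v - t *\<^sub>R k) - \<delta> * t | t k. 0 \<le> t \<and> k \<in> K}"

context
  fixes K :: "'a::real_normed_vector set" and \<delta> :: real
  assumes K_ne: "K \<noteq> {}" and far: "\<And>k. k \<in> K \<Longrightarrow> \<delta> \<le> norm k"
begin

lemma cone_gauge_le:
  assumes "0 \<le> t" "k \<in> K"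
  shows "cone_gauge K \<delta> v \<le> norm (v - t *\<^sub>R k) - \<delta> * t"
proof -
  have "- norm v \<le> norm (v - t *\<^sub>R k) - \<delta> * t" if "0 \<le> t" "k \<in> K" for t k
  proof -
    have "\<delta> * t \<le> norm k * t" using far[OF \<open>k \<in> K\<close>] \<open>0 \<le> t\<close> by (rule mult_right_mono)
    also have "\<dots> = norm (t *\<^sub>R k)" using \<open>0 \<le> t\<close> by simp
    also have "\<dots> \<le> norm (v - t *\<^sub>R k) + norm v" by (metis norm_minus_commute norm_triangle_sub add.commute)
    finally show ?thesis by simp
  qed
  hence "bdd_below {norm (v - t *\<^sub>R k) - \<delta> * t | t k. 0 \<le> t \<and> k \<in> K}"
    unfolding bdd_below_def by blast
  moreover have "norm (v - t *\<^sub>R k) - \<delta> * t \<in> {norm (v - t *\<^sub>R k) - \<delta> * t | t k. 0 \<le> t \<and> k \<in> K}"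
    using assms by blast
  ultimately show ?thesis unfolding cone_gauge_def by (simp add: cInf_lower)
qed

lemma cone_gauge_greatest:
  assumes "\<And>t k. 0 \<le> t \<Longrightarrow> k \<in> K \<Longrightarrow> b \<le> norm (v - t *\<^sub>R k) - \<delta> * t"
  shows "b \<le> cone_gauge K \<delta> v"
proof -
  obtain k where "k \<in> K" using K_ne by blast
  hence "norm (v - 0 *\<^sub>R k) - \<delta> * 0 \<in> {norm (v - t *\<^sub>R k) - \<delta> * t | t k. 0 \<le> t \<and> k \<in> K}"
    by blast
  thus ?thesis unfolding cone_gauge_def by (rule cInf_greatest[OF ex_in_conv[THEN iffD1, OF exI]]) (use assms in auto)
qed

lemma cone_gauge_le_norm: "cone_gauge K \<delta> v \<le> norm v"
  using K_ne cone_gauge_le[of 0 _ v] by auto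

lemma cone_gauge_on_cone: "k \<in> K \<Longrightarrow> cone_gauge K \<delta> k \<le> - \<delta>"
  using cone_gauge_le[of 1 k k] by simp

lemma cone_gauge_add:
  assumes "convex K"
  shows "cone_gauge K \<delta> (v + w) \<le> cone_gauge K \<delta> v + cone_gauge K \<delta> w"
proof -
  have "cone_gauge K \<delta> (v + w) \<le> (norm (v - t1 *\<^sub>R k1) - \<delta> * t1) + (norm (w - t2 *\<^sub>R k2) - \<delta> * t2)"
    if t: "0 \<le> t1" "0 \<le> t2" and k: "k1 \<in> K" "k2 \<in> K" for t1 t2 k1 k2
  proof (cases "t1 + t2 = 0")
    case True
    hence "t1 = 0" "t2 = 0" using t by auto
    thus ?thesis using cone_gauge_le_norm[of "v + w"] norm_triangle_ineq[of v w] by simp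
  next
    case False
    define T where "T = t1 + t2"
    have T: "0 < T" using False t unfolding T_def by auto
    define k where "k = (t1 / T) *\<^sub>R k1 + (t2 / T) *\<^sub>R k2"
    have "k \<in> K" unfolding k_def
      by (rule convexD[OF assms k]) (use t T in \<open>auto simp: T_def add_divide_distrib[symmetric]\<close>)
    have "T *\<^sub>R k = t1 *\<^sub>R k1 + t2 *\<^sub>R k2" using T unfolding k_def by (simp add: scaleR_add_right)
    hence "(v + w) - T *\<^sub>R k = (v - t1 *\<^sub>R k1) + (w - t2 *\<^sub>R k2)" by (simp add: algebra_simps)
    moreover have "cone_gauge K \<delta> (v + w) \<le> norm ((v + w) - T *\<^sub>R k) - \<delta> * T"
      using cone_gauge_le[OF _ \<open>k \<in> K\<close>] T by simp
    ultimately show ?thesis using norm_triangle_ineq[of "v - t1 *\<^sub>R k1" "w - t2 *\<^sub>R k2"] unfolding T_def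
      by (simp add: algebra_simps)
  qed
  hence "cone_gauge K \<delta> (v + w) - cone_gauge K \<delta> w \<le> norm (v - t1 *\<^sub>R k1) - \<delta> * t1"
    if "0 \<le> t1" "k1 \<in> K" for t1 k1
    using cone_gauge_greatest[of "cone_gauge K \<delta> (v + w) - (norm (v - t1 *\<^sub>R k1) - \<delta> * t1)" w] that
    by fastforce
  hence "cone_gauge K \<delta> (v + w) - cone_gauge K \<delta> w \<le> cone_gauge K \<delta> v"
    by (rule cone_gauge_greatest)
  thus ?thesis by simp
qed

lemma cone_gauge_scaleR_le:
  assumes s: "0 < s"
  shows "cone_gauge K \<delta> (s *\<^sub>R v) \<le> s * cone_gauge K \<delta> v"
proof -
  have "cone_gauge K \<delta> (s *\<^sub>R v) / s \<le> norm (v - t *\<^sub>R k) - \<delta> * t" if "0 \<le> t" "k \<in> K" for t k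
  proof -
    have "cone_gauge K \<delta> (s *\<^sub>R v) \<le> norm (s *\<^sub>R v - (s * t) *\<^sub>R k) - \<delta> * (s * t)"
      using cone_gauge_le[OF _ \<open>k \<in> K\<close>] s that by simp
    also have "s *\<^sub>R v - (s * t) *\<^sub>R k = s *\<^sub>R (v - t *\<^sub>R k)" by (simp add: algebra_simps)
    also have "norm (s *\<^sub>R (v - t *\<^sub>R k)) - \<delta> * (s * t) = s * (norm (v - t *\<^sub>R k) - \<delta> * t)"
      by (simp only: norm_scaleR abs_of_pos[OF s]) (simp add: algebra_simps)
    finally show ?thesis using s by (simp add: divide_simps mult.commute)
  qed
  hence "cone_gauge K \<delta> (s *\<^sub>R v) / s \<le> cone_gauge K \<delta> v" by (rule cone_gauge_greatest)
  thus ?thesis using s by (simp add: divide_simps mult.commute)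
qed

lemma sublinear_cone_gauge:
  assumes "convex K"
  shows "sublinear (cone_gauge K \<delta>)"
  unfolding sublinear_def
proof (intro conjI allI impI)
  show "cone_gauge K \<delta> (x + y) \<le> cone_gauge K \<delta> x + cone_gauge K \<delta> y" for x y
    by (rule cone_gauge_add[OF assms])
  fix s x assume s: "(0::real) < s"
  have "cone_gauge K \<delta> x = cone_gauge K \<delta> ((1 / s) *\<^sub>R (s *\<^sub>R x))" using s by simp
  also have "\<dots> \<le> (1 / s) * cone_gauge K \<delta> (s *\<^sub>R x)" using s by (intro cone_gauge_scaleR_le) simp
  finally have "s * cone_gauge K \<delta> x \<le> cone_gauge K \<delta> (s *\<^sub>R x)"
    using s by (simp add: divide_simps mult.commute)
  thus "cone_gauge K \<delta> (s *\<^sub>R x) = s * cone_gauge K \<delta> x"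
    using cone_gauge_scaleR_le[OF s, of x] by linarith
qed

end

lemma convex_separation_far_point:
  fixes C :: "'a::real_normed_vector set"
  assumes "convex C" and "\<And>c. c \<in> C \<Longrightarrow> \<delta> \<le> norm (c - z)"
  shows "\<exists>g. linear g \<and> (\<forall>v. \<bar>g v\<bar> \<le> norm v) \<and> (\<forall>c\<in>C. g c \<le> g z - \<delta>)"
proof (cases "C = {}")
  case True
  thus ?thesis using linear_zero by force
next
  case False
  define K where "K = (\<lambda>c. c - z) ` C"
  have K: "K \<noteq> {}" "\<And>k. k \<in> K \<Longrightarrow> \<delta> \<le> norm k" "convex K"
    using False assms convex_translation_subtract[OF assms(1)] unfolding K_def by auto
  obtain g where g: "linear g" "\<And>v. g v \<le> cone_gauge K \<delta> v"
    using hahn_banach_sublinear[OF sublinear_cone_gauge[OF K]] by blast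
  have "g v \<le> norm v" for v using g(2) cone_gauge_le_norm[OF K(1,2)] order_trans by blast
  hence "\<bar>g v\<bar> \<le> norm v" for v using linear_neg[OF g(1), of v] by (metis abs_le_iff norm_minus_cancel)
  moreover have "g c \<le> g z - \<delta>" if "c \<in> C" for c
    using g(2)[of "c - z"] cone_gauge_on_cone[OF K(1,2)] that linear_diff[OF g(1)] unfolding K_def by fastforce
  ultimately show ?thesis using g(1) by blast
qed

section \<open>Affine minorants and the biconjugate\<close>

definition ereal_epigraph :: "('a \<Rightarrow> ereal) \<Rightarrow> ('a \<times> real) set" where
  "ereal_epigraph f = {(y, s). f y \<le> ereal s}"

lemma closed_ereal_epigraph:
  fixes f :: "'a::topological_space \<Rightarrow> ereal"
  assumes "lsc_fun f"
  shows "closed (ereal_epigraph f)"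
proof -
  have "- ereal_epigraph f = (\<Union>s'. (- {y. f y \<le> ereal s'}) \<times> {..<s'})"
  proof (intro set_eqI iffI)
    fix z assume "z \<in> - ereal_epigraph f"
    then obtain y s where z: "z = (y, s)" "ereal s < f y" by (cases z) (auto simp: ereal_epigraph_def)
    then obtain s' where "ereal s < ereal s'" "ereal s' < f y"
      by (meson ereal_dense2 less_ereal.simps(1) ereal_less_ereal_Ex)
    thus "z \<in> (\<Union>s'. (- {y. f y \<le> ereal s'}) \<times> {..<s'})" using z by (auto simp: not_le)
  next
    fix z assume "z \<in> (\<Union>s'. (- {y. f y \<le> ereal s'}) \<times> {..<s'})"
    then obtain s' where "z \<in> (- {y. f y \<le> ereal s'}) \<times> {..<s'}" by blast
    then obtain y s where "z = (y, s)" "ereal s' < f y" "s < s'" by (cases z) (auto simp: not_le)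
    moreover hence "ereal s < f y" by (metis less_ereal.simps(1) order.strict_trans)
    ultimately show "z \<in> - ereal_epigraph f" by (auto simp: ereal_epigraph_def)
  qed
  moreover have "open (\<Union>s'. (- {y. f y \<le> ereal s'}) \<times> {..<s'})"
    using assms unfolding lsc_fun_def by (intro open_UN ballI open_Times) auto
  ultimately show ?thesis by (metis open_Compl double_complement closed_def)
qed

lemma convex_ereal_epigraph:
  fixes f :: "'a::real_vector \<Rightarrow> ereal"
  assumes "convex_fun f"
  shows "convex (ereal_epigraph f)"
proof (rule convexI)
  fix z1 z2 :: "'a \<times> real" and u v :: real
  assume z: "z1 \<in> ereal_epigraph f" "z2 \<in> ereal_epigraph f" "0 \<le> u" "0 \<le> v" "u + v = 1"
  obtain y1 s1 y2 s2 where e: "z1 = (y1, s1)" "z2 = (y2, s2)" "f y1 \<le> ereal s1" "f y2 \<le> ereal s2"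
    using z by (cases z1, cases z2) (auto simp: ereal_epigraph_def)
  consider "u = 0" | "v = 0" | "0 < u \<and> u < 1" using z by linarith
  thus "u *\<^sub>R z1 + v *\<^sub>R z2 \<in> ereal_epigraph f"
  proof cases
    case 3
    have v: "v = 1 - u" using z by simp
    have "f (u *\<^sub>R y1 + (1 - u) *\<^sub>R y2) \<le> ereal u * f y1 + ereal (1 - u) * f y2"
      using assms 3 unfolding convex_fun_def by blast
    also have "\<dots> \<le> ereal u * ereal s1 + ereal (1 - u) * ereal s2"
      using 3 e by (intro add_mono ereal_mult_left_mono) auto
    finally show ?thesis using e v by (simp add: ereal_epigraph_def)
  qed (use e z in \<open>auto simp: ereal_epigraph_def\<close>)
qed

text \<open>\<open>lam \<le> 0\<close> because the epigraph is unbounded above over the point \<open>y1\<close> of the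
  effective domain.\<close>

lemma ereal_epigraph_separation:
  fixes f :: "'a::real_normed_vector \<Rightarrow> ereal"
  assumes lsc: "lsc_fun f" and cf: "convex_fun f" and r: "ereal r < f x0" and y1: "f y1 < \<infinity>"
  shows "\<exists>\<phi> lam \<delta>. bounded_linear \<phi> \<and> lam \<le> 0 \<and> 0 < \<delta> \<and>
     (\<forall>(y, s) \<in> ereal_epigraph f. \<phi> y + lam * s \<le> \<phi> x0 + lam * r - \<delta>)"
proof -
  have "(x0, r) \<in> - ereal_epigraph f" using r by (auto simp: ereal_epigraph_def)
  then obtain \<delta> where \<delta>: "0 < \<delta>" "ball (x0, r) \<delta> \<subseteq> - ereal_epigraph f"
    using closed_ereal_epigraph[OF lsc] unfolding closed_def open_contains_ball by blast
  have "\<delta> \<le> norm (c - (x0, r))" if "c \<in> ereal_epigraph f" for c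
    using that \<delta>(2) by (force simp: dist_norm norm_minus_commute)
  then obtain g where g: "linear g" "\<And>v. \<bar>g v\<bar> \<le> norm v"
    "\<And>c. c \<in> ereal_epigraph f \<Longrightarrow> g c \<le> g (x0, r) - \<delta>"
    using convex_separation_far_point[OF convex_ereal_epigraph[OF cf]] by blast
  define \<phi> where "\<phi> y = g (y, 0)" for y
  define lam where "lam = g (0, 1)"
  have g_Pair: "g (y, s) = \<phi> y + lam * s" for y s
    using linear_add[OF g(1), of "(y, 0)" "s *\<^sub>R (0, 1)"] linear_scale[OF g(1), of s "(0, 1)"]
    unfolding \<phi>_def lam_def by simp
  have "bounded_linear \<phi>"
  proof (rule bounded_linear_intro[where K = 1])
    show "\<phi> (x + y) = \<phi> x + \<phi> y" for x y
      unfolding \<phi>_def using linear_add[OF g(1), of "(x, 0)" "(y, 0)"] by simp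
    show "\<phi> (c *\<^sub>R x) = c *\<^sub>R \<phi> x" for c x
      unfolding \<phi>_def using linear_scale[OF g(1), of c "(x, 0)"] by simp
    show "norm (\<phi> x) \<le> norm x * 1" for x
      unfolding \<phi>_def using g(2)[of "(x, 0)"] by (simp add: norm_Pair)
  qed
  moreover have sep: "\<phi> y + lam * s \<le> \<phi> x0 + lam * r - \<delta>" if "f y \<le> ereal s" for y s
    using g(3)[of "(y, s)"] that g_Pair by (simp add: ereal_epigraph_def)
  moreover have "lam \<le> 0"
  proof (rule ccontr)
    assume "\<not> lam \<le> 0"
    obtain s1 where "f y1 \<le> ereal s1" using y1 by (cases "f y1") auto
    define s where "s = max s1 ((\<phi> x0 + lam * r - \<delta> - \<phi> y1) / lam + 1)"
    have "f y1 \<le> ereal s" using \<open>f y1 \<le> ereal s1\<close> unfolding s_def by (simp add: order_trans)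
    moreover have "\<phi> x0 + lam * r - \<delta> - \<phi> y1 + lam \<le> lam * s"
      using \<open>\<not> lam \<le> 0\<close> unfolding s_def by (simp add: field_simps max_def)
    ultimately show False using sep \<open>\<not> lam \<le> 0\<close> by fastforce
  qed
  ultimately show ?thesis using \<delta>(1) unfolding ereal_epigraph_def by blast
qed

lemma affine_minorant_of_nonvertical_separation:
  fixes f :: "'a::real_normed_vector \<Rightarrow> ereal"
  assumes \<phi>: "bounded_linear \<phi>" and lam: "lam < 0" and \<delta>: "0 < \<delta>" and f: "no_minf f"
    and sep: "\<And>y s. f y \<le> ereal s \<Longrightarrow> \<phi> y + lam * s \<le> \<phi> x0 + lam * r - \<delta>"
  shows "\<exists>(ws :: 'a \<Rightarrow>\<^sub>L real) \<beta>. (\<forall>y. ereal (ws y - \<beta>) \<le> f y) \<and> r < ws x0 - \<beta>"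
proof -
  define ws where "ws = Blinfun (\<lambda>y. \<phi> y / - lam)"
  have "blinfun_apply ws = (\<lambda>y. \<phi> y / - lam)"
    unfolding ws_def by (rule bounded_linear_Blinfun_apply, rule bounded_linear_compose[OF bounded_linear_divide \<phi>])
  hence ws: "ws y = \<phi> y / - lam" for y by simp
  define \<beta> where "\<beta> = (\<phi> x0 - \<delta>) / - lam - r"
  have "ereal (ws y - \<beta>) \<le> f y" for y
  proof (cases "f y")
    case (real s)
    hence "\<phi> y + lam * s \<le> \<phi> x0 + lam * r - \<delta>" using sep by simp
    thus ?thesis using real lam unfolding ws \<beta>_def by (simp add: field_simps)
  qed (use f in \<open>auto simp: no_minf_def\<close>)
  moreover have "r < ws x0 - \<beta>" unfolding ws \<beta>_def using lam \<delta> by (simp add: field_simps)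
  ultimately show ?thesis by blast
qed

text \<open>If the separating hyperplane is vertical, tilt it with a nonvertical one obtained at a point
  of the effective domain.\<close>

lemma lsc_convex_affine_minorant:
  fixes f :: "'a::real_normed_vector \<Rightarrow> ereal"
  assumes lsc: "lsc_fun f" and cf: "convex_fun f" and pr: "proper_fun f" and r: "ereal r < f x0"
  shows "\<exists>(ws :: 'a \<Rightarrow>\<^sub>L real) \<beta>. (\<forall>y. ereal (ws y - \<beta>) \<le> f y) \<and> r < ws x0 - \<beta>"
proof -
  have f: "no_minf f" using pr unfolding proper_fun_def by blast
  obtain y1 s1 where s1: "f y1 = ereal s1"
    using pr unfolding proper_fun_def no_minf_def by (metis less_ereal.simps(2) real_of_ereal.cases)
  obtain \<phi> lam \<delta> where \<phi>: "bounded_linear \<phi>" and "lam \<le> 0" "0 < \<delta>"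
    and sep: "\<And>y s. f y \<le> ereal s \<Longrightarrow> \<phi> y + lam * s \<le> \<phi> x0 + lam * r - \<delta>"
    using ereal_epigraph_separation[OF lsc cf r, of y1] s1 unfolding ereal_epigraph_def by auto
  show ?thesis
  proof (cases "lam < 0")
    case True
    thus ?thesis using affine_minorant_of_nonvertical_separation[OF \<phi> True \<open>0 < \<delta>\<close> f sep] by blast
  next
    case False
    hence lam: "lam = 0" using \<open>lam \<le> 0\<close> by simp
    obtain \<phi>1 lam1 \<delta>1 where \<phi>1: "bounded_linear \<phi>1" and "lam1 \<le> 0" "0 < \<delta>1"
      and sep1: "\<And>y s. f y \<le> ereal s \<Longrightarrow> \<phi>1 y + lam1 * s \<le> \<phi>1 y1 + lam1 * (s1 - 1) - \<delta>1"
      using ereal_epigraph_separation[OF lsc cf, of "s1 - 1" y1 y1] s1 unfolding ereal_epigraph_def by auto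
    have "lam1 < 0"
      using sep1[of y1 s1] s1 \<open>lam1 \<le> 0\<close> \<open>0 < \<delta>1\<close> by (cases "lam1 = 0") auto
    then obtain ws1 :: "'a \<Rightarrow>\<^sub>L real" and \<beta>1 where ws1: "\<And>y. ereal (ws1 y - \<beta>1) \<le> f y"
      using affine_minorant_of_nonvertical_separation[OF \<phi>1 _ \<open>0 < \<delta>1\<close> f sep1] by blast
    have vertical: "\<phi> y \<le> \<phi> x0 - \<delta>" if "f y < \<infinity>" for y
      using that f sep[of y "real_of_ereal (f y)"] lam unfolding no_minf_def
      by (cases "f y") auto
    define \<mu> where "\<mu> = max 0 ((r - (ws1 x0 - \<beta>1)) / \<delta> + 1)"
    have \<mu>: "0 \<le> \<mu>" "r - (ws1 x0 - \<beta>1) + \<delta> \<le> \<mu> * \<delta>"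
      unfolding \<mu>_def using \<open>0 < \<delta>\<close> by (auto simp: field_simps max_def)
    define ws where "ws = ws1 + \<mu> *\<^sub>R Blinfun \<phi>"
    have ws: "ws y = ws1 y + \<mu> * \<phi> y" for y
      unfolding ws_def using bounded_linear_Blinfun_apply[OF \<phi>]
      by (simp add: blinfun.add_left blinfun.scaleR_left)
    define \<beta> where "\<beta> = \<beta>1 + \<mu> * (\<phi> x0 - \<delta>)"
    have "ereal (ws y - \<beta>) \<le> f y" for y
    proof (cases "f y < \<infinity>")
      case True
      have "\<mu> * \<phi> y \<le> \<mu> * (\<phi> x0 - \<delta>)" using vertical[OF True] \<mu>(1) by (rule mult_left_mono)
      hence "ws y - \<beta> \<le> ws1 y - \<beta>1" unfolding ws \<beta>_def by simp
      thus ?thesis using ws1[of y] order_trans ereal_less_eq(3) by blast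
    qed simp
    moreover have "r < ws x0 - \<beta>" unfolding ws \<beta>_def using \<mu> \<open>0 < \<delta>\<close> by (simp add: algebra_simps)
    ultimately show ?thesis by blast
  qed
qed

lemma conj_fun_le_of_affine_minorant:
  assumes "no_minf f" and "\<And>y. ereal (blinfun_apply ws y - \<beta>) \<le> f y"
  shows "conj_fun f ws \<le> ereal \<beta>"
  unfolding conj_fun_def
proof (rule SUP_least)
  fix y
  show "ereal (ws y) - f y \<le> ereal \<beta>"
    using assms(1) assms(2)[of y] by (cases "f y") (auto simp: no_minf_def)
qed

text \<open>Fenchel--Moreau, in the direction \<open>f \<le> f\<^sup>*\<^sup>*\<close> that needs Hahn--Banach.\<close>

lemma le_biconjugate_bound:
  fixes f :: "'a::real_normed_vector \<Rightarrow> ereal"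
  assumes "lsc_fun f" "convex_fun f" "proper_fun f"
    and bound: "\<And>ws. ereal (blinfun_apply ws x) - conj_fun f ws \<le> ereal r"
  shows "f x \<le> ereal r"
proof (rule ccontr)
  assume "\<not> f x \<le> ereal r"
  then obtain ws :: "'a \<Rightarrow>\<^sub>L real" and \<beta> where ws: "\<And>y. ereal (ws y - \<beta>) \<le> f y" and "r < ws x - \<beta>"
    using lsc_convex_affine_minorant[OF assms(1-3)] by (metis not_le)
  have "conj_fun f ws \<le> ereal \<beta>"
    using conj_fun_le_of_affine_minorant[OF _ ws] assms(3) unfolding proper_fun_def by blast
  hence "ereal (ws x) - ereal \<beta> \<le> ereal (ws x) - conj_fun f ws" by (rule ereal_minus_mono[OF order_refl])
  also have "\<dots> \<le> ereal r" by (rule bound)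
  finally show False using \<open>r < ws x - \<beta>\<close> by simp
qed

lemma T_breve_lower_bound:
  assumes h: "\<And>x xs. ereal (blinfun_apply xs x) \<le> h (x, xs)" and xs: "xs \<in> T_breve h (\<epsilon> / 2) x"
  shows "ereal (blinfun_apply xs (w - x) + blinfun_apply ws x - \<epsilon>) \<le> h (w, ws)"
proof -
  have "(xs, x) \<in> eps_subdiff_h \<epsilon> h (x, xs)" using xs unfolding T_breve_def by simp
  hence fin: "h (x, xs) < \<infinity>"
    and sub: "h (x, xs) + ereal (xs (w - x) + (ws - xs) x) - ereal \<epsilon> \<le> h (w, ws)"
    unfolding eps_subdiff_h_def by (auto split: if_splits)
  obtain e where e: "h (x, xs) = ereal e" using fin h[where x = x and xs = xs] by (cases "h (x, xs)") auto
  have "xs x \<le> e" using h[where x = x and xs = xs] e by simp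
  hence "ereal (xs (w - x) + ws x - \<epsilon>) \<le> h (x, xs) + ereal (xs (w - x) + (ws - xs) x) - ereal \<epsilon>"
    using e by (simp add: blinfun.diff_left)
  thus ?thesis using sub by (rule order_trans)
qed

lemma eps_subgradient_inequality_of_conj_bound:
  fixes f :: "'a::real_normed_vector \<Rightarrow> ereal"
  assumes "lsc_fun f" "convex_fun f" "proper_fun f"
    and bound: "\<And>w ws. ereal (blinfun_apply xs (w - x) + blinfun_apply ws x - \<epsilon>) \<le> f w + conj_fun f ws"
  shows "f x \<le> f w + ereal (\<epsilon> - blinfun_apply xs (w - x))"
proof (cases "f w")
  case (real a)
  have "ereal (blinfun_apply ws x) - conj_fun f ws \<le> ereal (a + (\<epsilon> - xs (w - x)))" for ws
    using bound[of w ws] real by (cases "conj_fun f ws") auto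
  thus ?thesis using le_biconjugate_bound[OF assms(1-3)] real by simp
next
  case MInf
  thus ?thesis using assms(3) unfolding proper_fun_def no_minf_def by simp
qed simp

lemma eps_subdiffI:
  assumes "proper_fun f" and ineq: "\<And>w. f x \<le> f w + ereal (\<epsilon> - blinfun_apply xs (w - x))"
  shows "xs \<in> eps_subdiff \<epsilon> f x"
proof -
  have f: "no_minf f" and "\<exists>w. f w < \<infinity>" using assms(1) unfolding proper_fun_def by auto
  then obtain w a where "f w = ereal a" unfolding no_minf_def by (metis less_ereal.simps(2) real_of_ereal.cases)
  then obtain b where b: "f x = ereal b" using ineq[of w] f unfolding no_minf_def by (cases "f x") auto
  have "ereal (xs (y - x)) - ereal \<epsilon> \<le> f y - f x" for y
    using ineq[of y] b f unfolding no_minf_def by (cases "f y") auto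
  thus ?thesis unfolding eps_subdiff_def using b by simp
qed

theorem theorem4p1:
  fixes f :: "'a::banach \<Rightarrow> ereal"
    and h :: "'a \<times> ('a \<Rightarrow>\<^sub>L real) \<Rightarrow> ereal"
  assumes "reflexive_space TYPE('a)"
    and "lsc_fun f" and "proper_fun f" and "convex_fun f"
    and "h \<in> repr_class (subdiff f)"
    and "\<forall>z. h z \<le> FY f z"
  shows "\<forall>\<epsilon>>0. \<forall>x. T_breve h (\<epsilon> / 2) x \<subseteq> eps_subdiff \<epsilon> f x"
proof (intro allI impI subsetI)
  fix \<epsilon> :: real and x xs
  assume "xs \<in> T_breve h (\<epsilon> / 2) x"
  moreover have "\<And>x xs. ereal (blinfun_apply xs x) \<le> h (x, xs)" using assms(5) unfolding repr_class_def by blast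
  ultimately have "ereal (blinfun_apply xs (w - x) + blinfun_apply ws x - \<epsilon>) \<le> f w + conj_fun f ws"
    for w ws
    using T_breve_lower_bound assms(6)[rule_format, of "(w, ws)"] unfolding FY_def
    by (metis fst_conv snd_conv order_trans)
  thus "xs \<in> eps_subdiff \<epsilon> f x"
    using eps_subdiffI[OF assms(3) eps_subgradient_inequality_of_conj_bound[OF assms(2,4,3)]] by blast
qed

end
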